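(* Let $a,b,u,v$ be integers with $b>a\ge2$ and $u,v\ge2$, and set $X:=ab-a-b$. Suppose that (1) $a$, $b$ and $uv-1$ are pairwise coprime; (2) $\frac{1}{a}+\frac{1}{b}+\frac{v}{uv-1}>1$; (3) $vab-1=(uv-1)X$. Then $u\in\{2,3,6\}$; moreover, if $u=6$ then $(a,b)=(2,3)$, i.e. the triple $(a,b,uv-1)$ equals $(2,3,6v-1)$. *)

theory Defs
  imports Complex_Main
begin

end

theory Submission
  imports Defs
begin

(* With X = ab - a - b the equation rearranges to X ((u - 1) v - 1) = v (a + b) - 1.
   For u >= 4 the left side is at least X (3v - 1), and since 2X >= a + b as soon as
   a >= 3, this exceeds the right side unless a = 2 and b <= 4.  The pair (2, 4) is
   ruled out by parity, and (a, b) = (2, 3) gives X = 1 and hence u = 6. *)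

lemma frobenius_equation_rearranged:
  fixes a b u v :: int
  assumes "v * a * b - 1 = (u * v - 1) * (a * b - a - b)"
  shows "(a * b - a - b) * ((u - 1) * v - 1) = v * (a + b) - 1"
  using assms by (simp add: algebra_simps)

lemma frobenius_number_ge_1:
  fixes a b :: int
  assumes "2 \<le> a" and "a < b"
  shows "1 \<le> a * b - a - b"
proof -
  have "1 * 2 \<le> (a - 1) * (b - 1)"
    using assms by (intro mult_mono) auto
  then show ?thesis by (simp add: algebra_simps)
qed

lemma frobenius_number_bound_imp_small_pair:
  fixes a b v :: int
  assumes "2 \<le> a" and "a < b" and "2 \<le> v"
    and bound: "(a * b - a - b) * (3 * v - 1) \<le> v * (a + b) - 1"
  shows "a = 2 \<and> b \<le> 4"
proof (cases "a = 2")
  case True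
  have "(b - 2) * (3 * v - 1) \<le> v * (b + 2) - 1"
    using bound True by (simp add: algebra_simps)
  then have "(b - 4) * (2 * v - 1) \<le> 1"
    by (simp add: algebra_simps)
  then have "b \<le> 4"
  proof (rule contrapos_pp)
    assume "\<not> b \<le> 4"
    then have "1 * 3 \<le> (b - 4) * (2 * v - 1)"
      using \<open>2 \<le> v\<close> by (intro mult_mono) auto
    then show "\<not> (b - 4) * (2 * v - 1) \<le> 1" by simp
  qed
  with True show ?thesis by simp
next
  case False
  then have "3 \<le> a" and "4 \<le> b"
    using assms(1,2) by auto
  then have "3 * 5 \<le> (2 * a - 3) * (2 * b - 3)"
    by (intro mult_mono) auto
  then have "a + b \<le> 2 * (a * b - a - b)"
    by (simp add: algebra_simps)
  then have "(a + b) * v \<le> 2 * (a * b - a - b) * v"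
    using \<open>2 \<le> v\<close> by (intro mult_right_mono) auto
  moreover have "(a * b - a - b) * (2 * v) \<le> (a * b - a - b) * (3 * v - 1)"
    using frobenius_number_ge_1[OF assms(1,2)] \<open>2 \<le> v\<close> by (intro mult_left_mono) auto
  ultimately show ?thesis
    using bound by (simp add: algebra_simps)
qed

lemma frobenius_equation_large_u_imp_2_3:
  fixes a b u v :: int
  assumes "2 \<le> a" and "a < b" and "4 \<le> u" and "2 \<le> v"
    and eq: "v * a * b - 1 = (u * v - 1) * (a * b - a - b)"
  shows "(a, b) = (2, 3)"
proof -
  have "3 * v \<le> (u - 1) * v"
    using assms(3,4) by (intro mult_right_mono) auto
  then have "(a * b - a - b) * (3 * v - 1) \<le> (a * b - a - b) * ((u - 1) * v - 1)"
    using frobenius_number_ge_1[OF assms(1,2)] by (intro mult_left_mono) auto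
  also have "\<dots> = v * (a + b) - 1"
    using frobenius_equation_rearranged[OF eq] .
  finally have "a = 2 \<and> b \<le> 4"
    using frobenius_number_bound_imp_small_pair assms(1,2,4) by blast
  moreover have "b \<noteq> 4"
  proof
    assume "b = 4"
    with eq \<open>a = 2 \<and> b \<le> 4\<close> have parity: "8 * v - 1 = 2 * (u * v - 1)"
      by (simp add: algebra_simps)
    have "odd (2 * (u * v - 1))"
      unfolding parity[symmetric] by simp
    then show False by simp
  qed
  ultimately show ?thesis
    using assms(2) by auto
qed

lemma frobenius_equation_2_3_imp_u_eq_6:
  fixes u v :: int
  assumes "v \<noteq> 0" and "v * 2 * 3 - 1 = (u * v - 1) * (2 * 3 - 2 - 3)"
  shows "u = 6"
  using assms by (simp add: algebra_simps)

theorem lemma3p4: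
  fixes a b u v :: int
  assumes "2 \<le> a" and "a < b" and "2 \<le> u" and "2 \<le> v"
    and "coprime a b" and "coprime a (u * v - 1)" and "coprime b (u * v - 1)"
    and "1 / real_of_int a + 1 / real_of_int b + real_of_int v / real_of_int (u * v - 1) > 1"
    and "v * a * b - 1 = (u * v - 1) * (a * b - a - b)"
  shows "u \<in> {2, 3, 6} \<and> (u = 6 \<longrightarrow> (a, b) = (2, 3))"
proof (cases "u \<le> 3")
  case True
  then show ?thesis
    using \<open>2 \<le> u\<close> by auto
next
  case False
  then have "(a, b) = (2, 3)"
    using frobenius_equation_large_u_imp_2_3[OF assms(1,2) _ assms(4,9)] by simp
  moreover have "u = 6"
    using frobenius_equation_2_3_imp_u_eq_6 \<open>2 \<le> v\<close> assms(9) calculation by simp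
  ultimately show ?thesis by simp
qed

end
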